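(* Consider the fully discrete scheme described in the context. Any solution of the scheme satisfies, for every $\Delta t>0$, the discrete energy law $$\frac{\tilde F^{n+1}-\tilde F^n}{\Delta t}=-\Delta x\Delta y\Big[\sum_{i=0}^{N_x}\sum_{j=1}^{N_y}\big(A_x(\psi\bar M^{n+\frac12})\,|D_x(\chi\mu_*^{n+\frac12})|^2\big)_{i+\frac12,j}+\sum_{i=1}^{N_x}\sum_{j=0}^{N_y}\big(A_y(\psi\bar M^{n+\frac12})\,|D_y(\chi\mu_*^{n+\frac12})|^2\big)_{i,j+\frac12}\Big]$$ $$-\Delta x\Delta y\sum_{i=1}^{N_x}\sum_{j=1}^{N_y}\tfrac12\Gamma^{-1}\Big\{|D_x\psi|_{i-\frac12,j}\big(A_x\tfrac{\tilde\phi^{n+1}-\tilde\phi^n}{\Delta t}\big)^2_{i-\frac12,j}+|D_x\psi|_{i+\frac12,j}\big(A_x\tfrac{\tilde\phi^{n+1}-\tilde\phi^n}{\Delta t}\big)^2_{i+\frac12,j}+|D_y\psi|_{i,j-\frac12}\big(A_y\tfrac{\tilde\phi^{n+1}-\tilde\phi^n}{\Delta t}\big)^2_{i,j-\frac12}+|D_y\psi|_{i,j+\frac12}\big(A_y\tfrac{\tilde\phi^{n+1}-\tilde\phi^n}{\Delta t}\big)^2_{i,j+\frac12}\Big\}$$ $$-\Delta x\Delta y\sum_{i=1}^{N_x}\sum_{j=1}^{N_y}\mu^{n+\frac12}_{*,i,j}\,\chi_{i,j}\,\mathcal B(h_3)_{i,j},$$ where the discrete energy is $$\tilde F^n=\Delta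 x\Delta y\sum_{i=1}^{N_x}\sum_{j=1}^{N_y}\Big\{\tfrac12\psi_{i,j}|q^n_{i,j}|^2+\tfrac12K\big[(A_x\psi)_{i+\frac12,j}(D_x\tilde\phi^n)^2_{i+\frac12,j}+(A_y\psi)_{i,j+\frac12}(D_y\tilde\phi^n)^2_{i,j+\frac12}\big]+\mathcal B\big(\tfrac12\alpha(\tilde\phi^n-h_1)^2\big)^{\sharp}_{i,j}\Big\},$$ with $\mathcal B(\cdot)^{\sharp}$ defined in the context. Therefore the scheme is unconditionally energy stable: in particular, when $h_3\equiv0$, $\tilde F^{n+1}\le\tilde F^n$ for every $\Delta t>0$.
   Context: Domain and grid: $\Omega=[-\tfrac12L_x,\tfrac12L_x]\times[-\tfrac12L_y,\tfrac12L_y]$ is divided into $N_x\times N_y$ uniform cells with $\Delta x=L_x/N_x$, $\Delta y=L_y/N_y$; grid functions $u_{i,j}$ live at cell centers $i=1,\dots,N_x$, $j=1,\dots,N_y$, with ghost indices $i=0,N_x+1$, $j=0,N_y+1$. For a cell-centered $u$ define face quantities $(A_xu)_{i+\frac12,j}=\tfrac12(u_{i+1,j}+u_{i,j})$, $(D_xu)_{i+\frac12,j}=(u_{i+1,j}-u_{i,j})/\Delta x$ ($i=0,\dots,N_x$), and analogously $(A_yu)_{i,j+\frac12}$, $(D_yu)_{i,j+\frac12}$; for a face function $w$, $(D_xw)_{i,j}=(w_{i+\frac12,j}-w_{i-\frac12,j})/\Delta x$, $(D_yw)_{i,j}=(w_{i,j+\frac12}-w_{i,j-\frac12})/\Delta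 y$. Set $D_h(a,u)_{i,j}=D_x(A_xa\,D_xu)_{i,j}+D_y(A_ya\,D_yu)_{i,j}$. Given data: a grid function $\psi>0$ (discrete approximation of the characteristic function of the original domain $\Omega_1\subset\Omega$) with $\chi=1/\psi$; constants $K>0$, $\alpha\ge0$, $\Gamma>0$, $\Delta t>0$; a positive mobility grid function $\bar M^{n+\frac12}$; time-independent grid functions $h_1,h_2,h_3$; $g(\phi)=f'(\phi)/\sqrt{2f(\phi)+2A}$ for a bulk potential $f$ and constant $A$ with $2f+2A>0$, and $\bar g^{n+\frac12}_{i,j}$ denotes $g$ evaluated at $\tfrac32\tilde\phi^n_{i,j}-\tfrac12\tilde\phi^{n-1}_{i,j}$ ($n\ge1$) or at $\tilde\phi^0_{i,j}$ ($n=0$). Notation $u^{n+\frac12}=\tfrac12(u^{n+1}+u^n)$. For a cell-centered $w$ define $\mathcal B(w)_{i,j}=\tfrac12\big[|D_x\psi|_{i-\frac12,j}(A_xw)_{i-\frac12,j}+|D_x\psi|_{i+\frac12,j}(A_xw)_{i+\frac12,j}+|D_y\psi|_{i,j-\frac12}(A_yw)_{i,j-\frac12}+|D_y\psi|_{i,j+\frac12}(A_yw)_{i,j+\frac12}\big]$, and define the boundary energy density $\mathcal B(\cdot)^{\sharp}_{i,j}=\tfrac12\sum_{e}|D\psi|_e\big[\tfrac12\alpha\big((A\tilde\phi^n)_e-(Ah_1)_e\big)^2-(Ah_2)_e(A\tilde\phi^n)_e\big]$, where $e$ runs over the four faces $(i\pm\frac12,j)$, $(i,j\pm\frac12)$ of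 cell $(i,j)$, with $|D\psi|_e$, $A$ meaning $|D_x\psi|$, $A_x$ on $x$-faces and $|D_y\psi|$, $A_y$ on $y$-faces. The scheme: given $\tilde\phi^n,q^n$, find $\tilde\phi^{n+1},q^{n+1},\mu_*^{n+\frac12}$ with, at every cell $(i,j)$, (1) $\frac{\tilde\phi^{n+1}-\tilde\phi^n}{\Delta t}=\chi\,D_h(\psi\bar M^{n+\frac12},\chi\mu_*^{n+\frac12})-\chi\,\mathcal B(h_3)$; (2) $\mu_*^{n+\frac12}=\psi\,\bar g^{n+\frac12}q^{n+\frac12}-K\,D_h(\psi,\tilde\phi^{n+\frac12})+\mathcal B\big(\alpha(\tilde\phi^{n+\frac12}-h_1)-h_2+\Gamma^{-1}\frac{\tilde\phi^{n+1}-\tilde\phi^n}{\Delta t}\big)$; (3) $q^{n+1}-q^n=\bar g^{n+\frac12}(\tilde\phi^{n+1}-\tilde\phi^n)$. Boundary conditions (discrete homogeneous Neumann): the ghost values of $\tilde\phi^{n},\tilde\phi^{n+1}$, of $\psi$ (hence of $\chi$), and of $\mu_*^{n+\frac12}$ equal the adjacent interior values, e.g. $u_{0,j}=u_{1,j}$, $u_{N_x+1,j}=u_{N_x,j}$, $u_{i,0}=u_{i,1}$, $u_{i,N_y+1}=u_{i,N_y}$. *)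

theory Defs
  imports Complex_Main
begin

type_synonym grid = "int \<Rightarrow> int \<Rightarrow> real"

text \<open>Cell-centred grid functions u i j (i, j integers; interior 1..N, ghosts 0 and N+1).
 A face function on x-faces is indexed by the cell to its left: w i j represents w at (i+1/2, j);
 likewise on y-faces w i j represents w at (i, j+1/2).\<close>

definition Ax :: "grid \<Rightarrow> grid" where
  "Ax u = (\<lambda>i j. (u (i+1) j + u i j) / 2)"
definition Ay :: "grid \<Rightarrow> grid" where
  "Ay u = (\<lambda>i j. (u i (j+1) + u i j) / 2)"
definition Dx :: "real \<Rightarrow> grid \<Rightarrow> grid" where
  "Dx dx u = (\<lambda>i j. (u (i+1) j - u i j) / dx)"
definition Dy :: "real \<Rightarrow> grid \<Rightarrow> grid" where
  "Dy dy u = (\<lambda>i j. (u i (j+1) - u i j) / dy)"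

definition DDx :: "real \<Rightarrow> grid \<Rightarrow> grid" where
  "DDx dx w = (\<lambda>i j. (w i j - w (i-1) j) / dx)"
definition DDy :: "real \<Rightarrow> grid \<Rightarrow> grid" where
  "DDy dy w = (\<lambda>i j. (w i j - w i (j-1)) / dy)"

definition Dh :: "real \<Rightarrow> real \<Rightarrow> grid \<Rightarrow> grid \<Rightarrow> grid" where
  "Dh dx dy a u = (\<lambda>i j.
     DDx dx (\<lambda>k l. Ax a k l * Dx dx u k l) i j + DDy dy (\<lambda>k l. Ay a k l * Dy dy u k l) i j)"

definition Bop :: "real \<Rightarrow> real \<Rightarrow> grid \<Rightarrow> grid \<Rightarrow> grid" where
  "Bop dx dy psi w = (\<lambda>i j. (1/2) *
     ( \<bar>Dx dx psi (i-1) j\<bar> * Ax w (i-1) j + \<bar>Dx dx psi i j\<bar> * Ax w i j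
     + \<bar>Dy dy psi i (j-1)\<bar> * Ay w i (j-1) + \<bar>Dy dy psi i j\<bar> * Ay w i j))"

definition bdens :: "real \<Rightarrow> real \<Rightarrow> real \<Rightarrow> real \<Rightarrow> real" where
  "bdens \<alpha> a b p = (1/2) * \<alpha> * (p - a)^2 - b * p"

definition Bsharp :: "real \<Rightarrow> real \<Rightarrow> grid \<Rightarrow> real \<Rightarrow> grid \<Rightarrow> grid \<Rightarrow> grid \<Rightarrow> grid" where
  "Bsharp dx dy psi \<alpha> h1 h2 \<phi> = (\<lambda>i j. (1/2) *
     ( \<bar>Dx dx psi (i-1) j\<bar> * bdens \<alpha> (Ax h1 (i-1) j) (Ax h2 (i-1) j) (Ax \<phi> (i-1) j)
     + \<bar>Dx dx psi i j\<bar> * bdens \<alpha> (Ax h1 i j) (Ax h2 i j) (Ax \<phi> i j)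
     + \<bar>Dy dy psi i (j-1)\<bar> * bdens \<alpha> (Ay h1 i (j-1)) (Ay h2 i (j-1)) (Ay \<phi> i (j-1))
     + \<bar>Dy dy psi i j\<bar> * bdens \<alpha> (Ay h1 i j) (Ay h2 i j) (Ay \<phi> i j)))"

definition neumann :: "nat \<Rightarrow> nat \<Rightarrow> grid \<Rightarrow> bool" where
  "neumann Nx Ny u \<longleftrightarrow>
     (\<forall>j\<in>{1..int Ny}. u 0 j = u 1 j \<and> u (int Nx + 1) j = u (int Nx) j) \<and>
     (\<forall>i\<in>{1..int Nx}. u i 0 = u i 1 \<and> u i (int Ny + 1) = u i (int Ny))"

definition gfun :: "(real \<Rightarrow> real) \<Rightarrow> (real \<Rightarrow> real) \<Rightarrow> real \<Rightarrow> real \<Rightarrow> real" where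
  "gfun f f' A x = f' x / sqrt (2 * f x + 2 * A)"

definition energy :: "nat \<Rightarrow> nat \<Rightarrow> real \<Rightarrow> real \<Rightarrow> grid \<Rightarrow> real \<Rightarrow> real
                       \<Rightarrow> grid \<Rightarrow> grid \<Rightarrow> grid \<Rightarrow> grid \<Rightarrow> real" where
  "energy Nx Ny dx dy psi K \<alpha> h1 h2 \<phi> q =
     dx * dy * (\<Sum>i\<in>{1..int Nx}. \<Sum>j\<in>{1..int Ny}.
        (1/2) * psi i j * (q i j)^2
      + (1/2) * K * (Ax psi i j * (Dx dx \<phi> i j)^2 + Ay psi i j * (Dy dy \<phi> i j)^2)
      + Bsharp dx dy psi \<alpha> h1 h2 \<phi> i j)"

end

theory Submission
  imports Defs
begin

text \<open>Test (1) with \<open>\<mu>\<^sub>*\<close> and (2) with the difference quotient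
  \<open>d = (\<phi>\<^sup>n\<^sup>+\<^sup>1 - \<phi>\<^sup>n) / \<Delta>t\<close>, and sum over the interior cells. Summation by parts
  (the discrete Green formula for \<open>D\<^sub>h\<close> and its analogue for the boundary operator \<open>B\<close>;
  no boundary terms arise because the Neumann ghost values make every difference across an outer face
  vanish) turns the first sum into minus the mobility dissipation minus the work of \<open>h\<^sub>3\<close>.
  In the second, (3) and the identity \<open>(a + b)/2 \<cdot> (a - b) = (a\<^sup>2 - b\<^sup>2)/2\<close>, applied cell by cell
  and face by face, make every term a difference quotient of the energy, except the
  \<open>\<Gamma>\<^sup>-\<^sup>1\<close> part of \<open>B\<close>, which is the boundary dissipation.\<close>

definition grid_sum :: "nat \<Rightarrow> nat \<Rightarrow> grid \<Rightarrow> real" where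
  "grid_sum Nx Ny u = (\<Sum>i\<in>{1..int Nx}. \<Sum>j\<in>{1..int Ny}. u i j)"

lemma grid_sum_add: "grid_sum Nx Ny (\<lambda>i j. u i j + v i j) = grid_sum Nx Ny u + grid_sum Nx Ny v"
  by (simp add: grid_sum_def sum.distrib)

lemma grid_sum_diff: "grid_sum Nx Ny (\<lambda>i j. u i j - v i j) = grid_sum Nx Ny u - grid_sum Nx Ny v"
  by (simp add: grid_sum_def sum_subtractf)

lemma grid_sum_minus: "grid_sum Nx Ny (\<lambda>i j. - u i j) = - grid_sum Nx Ny u"
  by (simp add: grid_sum_def sum_negf)

lemma grid_sum_mult_left: "grid_sum Nx Ny (\<lambda>i j. c * u i j) = c * grid_sum Nx Ny u"
  by (simp add: grid_sum_def sum_distrib_left)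

lemma grid_sum_divide: "grid_sum Nx Ny (\<lambda>i j. u i j / c) = grid_sum Nx Ny u / c"
  by (simp add: grid_sum_def sum_divide_distrib)

lemma grid_sum_cong:
  "(\<And>i j. i \<in> {1..int Nx} \<Longrightarrow> j \<in> {1..int Ny} \<Longrightarrow> u i j = v i j)
   \<Longrightarrow> grid_sum Nx Ny u = grid_sum Nx Ny v"
  unfolding grid_sum_def by (intro sum.cong refl) auto

lemma sum_shift_pred_int:
  fixes g :: "int \<Rightarrow> 'a::ab_group_add"
  assumes "g 0 = g (int n)"
  shows "(\<Sum>i\<in>{1..int n}. g (i - 1)) = (\<Sum>i\<in>{1..int n}. g i)"
proof -
  have "(\<Sum>i\<in>{1..int m}. g (i - 1)) + g (int m) = g 0 + (\<Sum>i\<in>{1..int m}. g i)" for m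
  proof (induction m)
    case 0
    then show ?case by simp
  next
    case (Suc m)
    have "{1..int (Suc m)} = insert (1 + int m) {1..int m}"
      by auto
    then show ?case
      using Suc.IH by (simp add: algebra_simps)
  qed
  from this[of n] show ?thesis
    using assms by (metis add.commute add_right_cancel)
qed

lemma grid_sum_shift:
  assumes "\<And>j. j \<in> {1..int Ny} \<Longrightarrow> Gx 0 j = 0 \<and> Gx (int Nx) j = 0"
    and "\<And>i. i \<in> {1..int Nx} \<Longrightarrow> Gy i 0 = 0 \<and> Gy i (int Ny) = 0"
  shows "grid_sum Nx Ny (\<lambda>i j. Gx (i - 1) j + Gy i (j - 1) + H i j)
       = grid_sum Nx Ny (\<lambda>i j. Gx i j + Gy i j + H i j)"
proof -
  have "grid_sum Nx Ny (\<lambda>i j. Gx (i - 1) j) = grid_sum Nx Ny Gx"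
    unfolding grid_sum_def
    by (rule sum_shift_pred_int[where g = "\<lambda>i. \<Sum>j\<in>{1..int Ny}. Gx i j"]) (simp add: assms(1))
  moreover have "grid_sum Nx Ny (\<lambda>i j. Gy i (j - 1)) = grid_sum Nx Ny Gy"
    unfolding grid_sum_def by (intro sum.cong refl sum_shift_pred_int) (simp add: assms(2))
  ultimately show ?thesis
    by (simp add: grid_sum_add)
qed

lemma neumann_D_boundary_eq_0:
  assumes "neumann Nx Ny u"
  shows "j \<in> {1..int Ny} \<Longrightarrow> Dx dx u 0 j = 0" "j \<in> {1..int Ny} \<Longrightarrow> Dx dx u (int Nx) j = 0"
    "i \<in> {1..int Nx} \<Longrightarrow> Dy dy u i 0 = 0" "i \<in> {1..int Nx} \<Longrightarrow> Dy dy u i (int Ny) = 0"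
  using assms by (auto simp: neumann_def Dx_def Dy_def)

lemma neumann_combine:
  assumes "neumann Nx Ny u" and "neumann Nx Ny v"
  shows "neumann Nx Ny (\<lambda>i j. F (u i j) (v i j))"
  using assms unfolding neumann_def by auto

lemma grid_sum_mult_Dh:
  assumes "neumann Nx Ny u"
  shows "grid_sum Nx Ny (\<lambda>i j. w i j * Dh dx dy a u i j)
       = - grid_sum Nx Ny (\<lambda>i j. Ax a i j * Dx dx u i j * Dx dx w i j + Ay a i j * Dy dy u i j * Dy dy w i j)"
proof -
  define Fx where "Fx = (\<lambda>i j. Ax a i j * Dx dx u i j / dx)"
  define Fy where "Fy = (\<lambda>i j. Ay a i j * Dy dy u i j / dy)"
  have "grid_sum Nx Ny (\<lambda>i j. w i j * Dh dx dy a u i j)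
      = grid_sum Nx Ny (\<lambda>i j. - (w i j * Fx (i - 1) j) - w i j * Fy i (j - 1)
                                 + w i j * (Fx i j + Fy i j))"
    by (simp add: Dh_def DDx_def DDy_def Fx_def Fy_def diff_divide_distrib algebra_simps)
  also have "\<dots> = grid_sum Nx Ny (\<lambda>i j. - (w (i + 1) j * Fx i j) - w i (j + 1) * Fy i j
                                 + w i j * (Fx i j + Fy i j))"
    using grid_sum_shift[of Ny "\<lambda>i j. - (w (i + 1) j * Fx i j)" Nx "\<lambda>i j. - (w i (j + 1) * Fy i j)"]
      neumann_D_boundary_eq_0[OF assms] by (simp add: Fx_def Fy_def)
  also have "\<dots> = - grid_sum Nx Ny (\<lambda>i j. Ax a i j * Dx dx u i j * Dx dx w i j + Ay a i j * Dy dy u i j * Dy dy w i j)"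
    by (simp add: grid_sum_minus[symmetric] Fx_def Fy_def Dx_def Dy_def diff_divide_distrib algebra_simps)
  finally show ?thesis .
qed

lemma grid_sum_Bop_mult:
  assumes "neumann Nx Ny psi"
  shows "grid_sum Nx Ny (\<lambda>i j. Bop dx dy psi w i j * v i j)
       = grid_sum Nx Ny (\<lambda>i j. \<bar>Dx dx psi i j\<bar> * Ax w i j * Ax v i j + \<bar>Dy dy psi i j\<bar> * Ay w i j * Ay v i j)"
proof -
  define Gx where "Gx = (\<lambda>i j. \<bar>Dx dx psi i j\<bar> * Ax w i j / 2)"
  define Gy where "Gy = (\<lambda>i j. \<bar>Dy dy psi i j\<bar> * Ay w i j / 2)"
  have "grid_sum Nx Ny (\<lambda>i j. Bop dx dy psi w i j * v i j)
      = grid_sum Nx Ny (\<lambda>i j. Gx (i - 1) j * v i j + Gy i (j - 1) * v i j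
                                 + (Gx i j + Gy i j) * v i j)"
    by (simp add: Bop_def Gx_def Gy_def algebra_simps)
  also have "\<dots> = grid_sum Nx Ny (\<lambda>i j. Gx i j * v (i + 1) j + Gy i j * v i (j + 1)
                                 + (Gx i j + Gy i j) * v i j)"
    using grid_sum_shift[of Ny "\<lambda>i j. Gx i j * v (i + 1) j" Nx "\<lambda>i j. Gy i j * v i (j + 1)"]
      neumann_D_boundary_eq_0[OF assms] by (simp add: Gx_def Gy_def)
  also have "\<dots> = grid_sum Nx Ny (\<lambda>i j. \<bar>Dx dx psi i j\<bar> * Ax w i j * Ax v i j + \<bar>Dy dy psi i j\<bar> * Ay w i j * Ay v i j)"
    by (intro grid_sum_cong) (simp add: Gx_def Gy_def Ax_def Ay_def field_simps)
  finally show ?thesis .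
qed

lemma grid_sum_face_mean:
  assumes "\<And>j. j \<in> {1..int Ny} \<Longrightarrow> Gx 0 j = 0 \<and> Gx (int Nx) j = 0"
    and "\<And>i. i \<in> {1..int Nx} \<Longrightarrow> Gy i 0 = 0 \<and> Gy i (int Ny) = 0"
  shows "grid_sum Nx Ny (\<lambda>i j. (1/2) * (Gx (i - 1) j + Gx i j + Gy i (j - 1) + Gy i j))
       = grid_sum Nx Ny (\<lambda>i j. Gx i j + Gy i j)"
proof -
  have "grid_sum Nx Ny (\<lambda>i j. (1/2) * (Gx (i - 1) j + Gx i j + Gy i (j - 1) + Gy i j))
      = (1/2) * grid_sum Nx Ny (\<lambda>i j. Gx (i - 1) j + Gy i (j - 1) + (Gx i j + Gy i j))"
    by (simp add: grid_sum_mult_left[symmetric] algebra_simps)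
  also have "\<dots> = (1/2) * grid_sum Nx Ny (\<lambda>i j. Gx i j + Gy i j + (Gx i j + Gy i j))"
    using assms by (subst grid_sum_shift) auto
  also have "\<dots> = grid_sum Nx Ny (\<lambda>i j. Gx i j + Gy i j)"
    by (simp add: grid_sum_add grid_sum_mult_left)
  finally show ?thesis .
qed

text \<open>Each face term of \<open>B\<^sup>\<sharp>\<close>, split there between the two adjacent cells, is charged
  here in full to the cell on its left (x-faces) or below it (y-faces).\<close>

definition energy_density :: "real \<Rightarrow> real \<Rightarrow> grid \<Rightarrow> real \<Rightarrow> real \<Rightarrow> grid \<Rightarrow> grid \<Rightarrow> grid \<Rightarrow> grid \<Rightarrow> grid" where
  "energy_density dx dy psi K \<alpha> h1 h2 \<phi> q = (\<lambda>i j.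
     (1/2) * psi i j * (q i j)^2
     + (1/2) * K * (Ax psi i j * (Dx dx \<phi> i j)^2 + Ay psi i j * (Dy dy \<phi> i j)^2)
     + \<bar>Dx dx psi i j\<bar> * bdens \<alpha> (Ax h1 i j) (Ax h2 i j) (Ax \<phi> i j)
     + \<bar>Dy dy psi i j\<bar> * bdens \<alpha> (Ay h1 i j) (Ay h2 i j) (Ay \<phi> i j))"

lemma energy_eq_grid_sum_energy_density:
  assumes "neumann Nx Ny psi"
  shows "energy Nx Ny dx dy psi K \<alpha> h1 h2 \<phi> q
       = dx * dy * grid_sum Nx Ny (energy_density dx dy psi K \<alpha> h1 h2 \<phi> q)"
proof -
  define Gx where "Gx = (\<lambda>i j. \<bar>Dx dx psi i j\<bar> * bdens \<alpha> (Ax h1 i j) (Ax h2 i j) (Ax \<phi> i j))"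
  define Gy where "Gy = (\<lambda>i j. \<bar>Dy dy psi i j\<bar> * bdens \<alpha> (Ay h1 i j) (Ay h2 i j) (Ay \<phi> i j))"
  define E where "E = (\<lambda>i j. (1/2) * psi i j * (q i j)^2
     + (1/2) * K * (Ax psi i j * (Dx dx \<phi> i j)^2 + Ay psi i j * (Dy dy \<phi> i j)^2))"
  have "energy Nx Ny dx dy psi K \<alpha> h1 h2 \<phi> q
      = dx * dy * (grid_sum Nx Ny E
          + grid_sum Nx Ny (\<lambda>i j. (1/2) * (Gx (i - 1) j + Gx i j + Gy i (j - 1) + Gy i j)))"
    by (simp add: energy_def grid_sum_def E_def Gx_def Gy_def Bsharp_def sum.distrib)
  also have "grid_sum Nx Ny (\<lambda>i j. (1/2) * (Gx (i - 1) j + Gx i j + Gy i (j - 1) + Gy i j))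
      = grid_sum Nx Ny (\<lambda>i j. Gx i j + Gy i j)"
    using neumann_D_boundary_eq_0[OF assms] by (intro grid_sum_face_mean) (simp_all add: Gx_def Gy_def)
  also have "grid_sum Nx Ny E + grid_sum Nx Ny (\<lambda>i j. Gx i j + Gy i j)
      = grid_sum Nx Ny (energy_density dx dy psi K \<alpha> h1 h2 \<phi> q)"
    by (simp add: grid_sum_add[symmetric] E_def Gx_def Gy_def energy_density_def add.assoc)
  finally show ?thesis .
qed

lemma bdens_diff:
  "bdens \<alpha> a b p1 - bdens \<alpha> a b p0 = (\<alpha> * ((p1 + p0) / 2 - a) - b) * (p1 - p0)"
  by (simp add: bdens_def power2_eq_square field_simps)

lemma mean_mult_diff_quotient:
  fixes a b t :: real
  shows "(a + b) / 2 * ((a - b) / t) = (a^2 / 2 - b^2 / 2) / t"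
  by (simp add: power2_eq_square algebra_simps add_divide_distrib diff_divide_distrib)

lemma bdens_mult_rate:
  "(\<alpha> * ((p1 + p0) / 2 - a) - b + c * ((p1 - p0) / t)) * ((p1 - p0) / t)
   = (bdens \<alpha> a b p1 - bdens \<alpha> a b p0) / t + c * ((p1 - p0) / t)^2"
proof -
  have "(\<alpha> * ((p1 + p0) / 2 - a) - b + c * ((p1 - p0) / t)) * ((p1 - p0) / t)
      = (\<alpha> * ((p1 + p0) / 2 - a) - b) * ((p1 - p0) / t) + c * ((p1 - p0) / t)^2"
    by (simp only: distrib_right power2_eq_square mult.assoc)
  also have "(\<alpha> * ((p1 + p0) / 2 - a) - b) * ((p1 - p0) / t) = (bdens \<alpha> a b p1 - bdens \<alpha> a b p0) / t"
    by (simp add: bdens_diff)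
  finally show ?thesis .
qed

lemma Ax_boundary_flux_rate:
  fixes \<phi>0 \<phi>1 h1 h2 :: grid and dt \<alpha> \<Gamma> :: real
  defines "d \<equiv> \<lambda>k l. (\<phi>1 k l - \<phi>0 k l) / dt"
    and "W \<equiv> \<lambda>k l. \<alpha> * ((\<phi>1 k l + \<phi>0 k l) / 2 - h1 k l) - h2 k l + (1 / \<Gamma>) * ((\<phi>1 k l - \<phi>0 k l) / dt)"
  shows "Ax W i j * Ax d i j
      = (bdens \<alpha> (Ax h1 i j) (Ax h2 i j) (Ax \<phi>1 i j) - bdens \<alpha> (Ax h1 i j) (Ax h2 i j) (Ax \<phi>0 i j)) / dt
        + (1 / \<Gamma>) * (Ax d i j)^2"
proof -
  have lin: "Ax W i j = \<alpha> * ((Ax \<phi>1 i j + Ax \<phi>0 i j) / 2 - Ax h1 i j) - Ax h2 i j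
                        + (1 / \<Gamma>) * ((Ax \<phi>1 i j - Ax \<phi>0 i j) / dt)"
    "Ax d i j = (Ax \<phi>1 i j - Ax \<phi>0 i j) / dt"
    by (simp_all add: Ax_def W_def d_def add_divide_distrib diff_divide_distrib algebra_simps)
  show ?thesis
    unfolding lin bdens_mult_rate ..
qed

lemma Ay_boundary_flux_rate:
  fixes \<phi>0 \<phi>1 h1 h2 :: grid and dt \<alpha> \<Gamma> :: real
  defines "d \<equiv> \<lambda>k l. (\<phi>1 k l - \<phi>0 k l) / dt"
    and "W \<equiv> \<lambda>k l. \<alpha> * ((\<phi>1 k l + \<phi>0 k l) / 2 - h1 k l) - h2 k l + (1 / \<Gamma>) * ((\<phi>1 k l - \<phi>0 k l) / dt)"
  shows "Ay W i j * Ay d i j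
      = (bdens \<alpha> (Ay h1 i j) (Ay h2 i j) (Ay \<phi>1 i j) - bdens \<alpha> (Ay h1 i j) (Ay h2 i j) (Ay \<phi>0 i j)) / dt
        + (1 / \<Gamma>) * (Ay d i j)^2"
proof -
  have lin: "Ay W i j = \<alpha> * ((Ay \<phi>1 i j + Ay \<phi>0 i j) / 2 - Ay h1 i j) - Ay h2 i j
                        + (1 / \<Gamma>) * ((Ay \<phi>1 i j - Ay \<phi>0 i j) / dt)"
    "Ay d i j = (Ay \<phi>1 i j - Ay \<phi>0 i j) / dt"
    by (simp_all add: Ay_def W_def d_def add_divide_distrib diff_divide_distrib algebra_simps)
  show ?thesis
    unfolding lin bdens_mult_rate ..
qed

lemma energy_density_diff:
  fixes \<phi>0 \<phi>1 q0 q1 h1 h2 :: grid and gb dt \<alpha> \<Gamma> :: real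
  defines "d \<equiv> \<lambda>k l. (\<phi>1 k l - \<phi>0 k l) / dt"
    and "W \<equiv> \<lambda>k l. \<alpha> * ((\<phi>1 k l + \<phi>0 k l) / 2 - h1 k l) - h2 k l + (1 / \<Gamma>) * ((\<phi>1 k l - \<phi>0 k l) / dt)"
  assumes "dt \<noteq> 0" and "q1 i j - q0 i j = gb * (\<phi>1 i j - \<phi>0 i j)"
  shows "(energy_density dx dy psi K \<alpha> h1 h2 \<phi>1 q1 i j - energy_density dx dy psi K \<alpha> h1 h2 \<phi>0 q0 i j) / dt
      + (1 / \<Gamma>) * (\<bar>Dx dx psi i j\<bar> * (Ax d i j)^2 + \<bar>Dy dy psi i j\<bar> * (Ay d i j)^2)
    = psi i j * gb * ((q1 i j + q0 i j) / 2) * d i j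
      + K * (Ax psi i j * Dx dx (\<lambda>k l. (\<phi>1 k l + \<phi>0 k l) / 2) i j * Dx dx d i j
           + Ay psi i j * Dy dy (\<lambda>k l. (\<phi>1 k l + \<phi>0 k l) / 2) i j * Dy dy d i j)
      + (\<bar>Dx dx psi i j\<bar> * Ax W i j * Ax d i j + \<bar>Dy dy psi i j\<bar> * Ay W i j * Ay d i j)"
proof -
  have q: "psi i j * gb * ((q1 i j + q0 i j) / 2) * d i j
      = ((1/2) * psi i j * (q1 i j)^2 - (1/2) * psi i j * (q0 i j)^2) / dt"
  proof -
    have "psi i j * gb * ((q1 i j + q0 i j) / 2) * d i j
        = psi i j * ((q1 i j + q0 i j) / 2) * (gb * d i j)"
      by (simp only: ac_simps)
    also have "gb * d i j = (q1 i j - q0 i j) / dt"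
      using assms(4) by (simp add: d_def)
    finally show ?thesis
      using assms(3) by (simp add: power2_eq_square field_simps)
  qed
  have grad: "K * (Ax psi i j * Dx dx (\<lambda>k l. (\<phi>1 k l + \<phi>0 k l) / 2) i j * Dx dx d i j
           + Ay psi i j * Dy dy (\<lambda>k l. (\<phi>1 k l + \<phi>0 k l) / 2) i j * Dy dy d i j)
      = ((1/2) * K * (Ax psi i j * (Dx dx \<phi>1 i j)^2 + Ay psi i j * (Dy dy \<phi>1 i j)^2)
         - (1/2) * K * (Ax psi i j * (Dx dx \<phi>0 i j)^2 + Ay psi i j * (Dy dy \<phi>0 i j)^2)) / dt"
  proof -
    have lin: "Dx dx (\<lambda>k l. (\<phi>1 k l + \<phi>0 k l) / 2) i j = (Dx dx \<phi>1 i j + Dx dx \<phi>0 i j) / 2"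
      "Dy dy (\<lambda>k l. (\<phi>1 k l + \<phi>0 k l) / 2) i j = (Dy dy \<phi>1 i j + Dy dy \<phi>0 i j) / 2"
      "Dx dx d i j = (Dx dx \<phi>1 i j - Dx dx \<phi>0 i j) / dt"
      "Dy dy d i j = (Dy dy \<phi>1 i j - Dy dy \<phi>0 i j) / dt"
      by (simp_all add: Dx_def Dy_def d_def add_divide_distrib diff_divide_distrib mult.commute)
    show ?thesis
      unfolding lin mult.assoc mean_mult_diff_quotient using assms(3) by (simp add: field_simps)
  qed
  have x_face: "Ax W i j * Ax d i j
      = (bdens \<alpha> (Ax h1 i j) (Ax h2 i j) (Ax \<phi>1 i j) - bdens \<alpha> (Ax h1 i j) (Ax h2 i j) (Ax \<phi>0 i j)) / dt
        + (1 / \<Gamma>) * (Ax d i j)^2"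
    unfolding d_def W_def by (rule Ax_boundary_flux_rate)
  have y_face: "Ay W i j * Ay d i j
      = (bdens \<alpha> (Ay h1 i j) (Ay h2 i j) (Ay \<phi>1 i j) - bdens \<alpha> (Ay h1 i j) (Ay h2 i j) (Ay \<phi>0 i j)) / dt
        + (1 / \<Gamma>) * (Ay d i j)^2"
    unfolding d_def W_def by (rule Ay_boundary_flux_rate)
  show ?thesis
    unfolding q grad mult.assoc[of "\<bar>Dx dx psi i j\<bar>"] mult.assoc[of "\<bar>Dy dy psi i j\<bar>"] x_face y_face
    by (simp add: energy_density_def diff_divide_distrib add_divide_distrib algebra_simps)
qed

lemma potential_rate_sum_eq_mobility_dissipation:
  assumes "neumann Nx Ny (\<lambda>k l. chi k l * \<mu> k l)"
    and "\<forall>i\<in>{1..int Nx}. \<forall>j\<in>{1..int Ny}. (\<phi>1 i j - \<phi>0 i j) / dt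
           = chi i j * Dh dx dy M (\<lambda>k l. chi k l * \<mu> k l) i j - chi i j * Bop dx dy psi h3 i j"
  shows "grid_sum Nx Ny (\<lambda>i j. \<mu> i j * ((\<phi>1 i j - \<phi>0 i j) / dt))
       = - grid_sum Nx Ny (\<lambda>i j. Ax M i j * (Dx dx (\<lambda>k l. chi k l * \<mu> k l) i j)^2
                               + Ay M i j * (Dy dy (\<lambda>k l. chi k l * \<mu> k l) i j)^2)
         - grid_sum Nx Ny (\<lambda>i j. \<mu> i j * chi i j * Bop dx dy psi h3 i j)"
proof -
  have "grid_sum Nx Ny (\<lambda>i j. \<mu> i j * ((\<phi>1 i j - \<phi>0 i j) / dt))
      = grid_sum Nx Ny (\<lambda>i j. chi i j * \<mu> i j * Dh dx dy M (\<lambda>k l. chi k l * \<mu> k l) i j)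
        - grid_sum Nx Ny (\<lambda>i j. \<mu> i j * chi i j * Bop dx dy psi h3 i j)"
    unfolding grid_sum_diff[symmetric] using assms(2)
    by (intro grid_sum_cong) (simp add: right_diff_distrib mult.assoc mult.left_commute)
  also have "grid_sum Nx Ny (\<lambda>i j. chi i j * \<mu> i j * Dh dx dy M (\<lambda>k l. chi k l * \<mu> k l) i j)
      = - grid_sum Nx Ny (\<lambda>i j. Ax M i j * (Dx dx (\<lambda>k l. chi k l * \<mu> k l) i j)^2
                               + Ay M i j * (Dy dy (\<lambda>k l. chi k l * \<mu> k l) i j)^2)"
    using grid_sum_mult_Dh[OF assms(1), of "\<lambda>k l. chi k l * \<mu> k l" dx dy M]
    by (simp add: power2_eq_square mult.assoc)
  finally show ?thesis .
qed

lemma potential_rate_sum_eq_energy_rate: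
  fixes \<phi>0 \<phi>1 h1 h2 :: grid and dt \<alpha> \<Gamma> :: real
  defines "d \<equiv> \<lambda>k l. (\<phi>1 k l - \<phi>0 k l) / dt"
  assumes "dt \<noteq> 0" and "neumann Nx Ny psi" and "neumann Nx Ny \<phi>0" and "neumann Nx Ny \<phi>1"
    and eq2: "\<forall>i\<in>{1..int Nx}. \<forall>j\<in>{1..int Ny}.
       \<mu> i j = psi i j * gb i j * ((q1 i j + q0 i j) / 2)
         - K * Dh dx dy psi (\<lambda>k l. (\<phi>1 k l + \<phi>0 k l) / 2) i j
         + Bop dx dy psi (\<lambda>k l. \<alpha> * ((\<phi>1 k l + \<phi>0 k l) / 2 - h1 k l) - h2 k l
                                 + (1 / \<Gamma>) * ((\<phi>1 k l - \<phi>0 k l) / dt)) i j"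
    and eq3: "\<forall>i\<in>{1..int Nx}. \<forall>j\<in>{1..int Ny}. q1 i j - q0 i j = gb i j * (\<phi>1 i j - \<phi>0 i j)"
  shows "grid_sum Nx Ny (\<lambda>i j. \<mu> i j * d i j)
       = (grid_sum Nx Ny (energy_density dx dy psi K \<alpha> h1 h2 \<phi>1 q1)
          - grid_sum Nx Ny (energy_density dx dy psi K \<alpha> h1 h2 \<phi>0 q0)) / dt
         + (1 / \<Gamma>) * grid_sum Nx Ny (\<lambda>i j. \<bar>Dx dx psi i j\<bar> * (Ax d i j)^2 + \<bar>Dy dy psi i j\<bar> * (Ay d i j)^2)"
proof -
  define ph where "ph = (\<lambda>k l. (\<phi>1 k l + \<phi>0 k l) / 2)"
  define W where "W = (\<lambda>k l. \<alpha> * ((\<phi>1 k l + \<phi>0 k l) / 2 - h1 k l) - h2 k l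
                                 + (1 / \<Gamma>) * ((\<phi>1 k l - \<phi>0 k l) / dt))"
  have "neumann Nx Ny ph"
    unfolding ph_def using assms(4,5) by (rule neumann_combine)
  have "grid_sum Nx Ny (\<lambda>i j. \<mu> i j * d i j)
      = grid_sum Nx Ny (\<lambda>i j. (psi i j * gb i j * ((q1 i j + q0 i j) / 2)
          - K * Dh dx dy psi ph i j + Bop dx dy psi W i j) * d i j)"
    using eq2 by (intro grid_sum_cong) (simp add: ph_def W_def)
  also have "\<dots> = grid_sum Nx Ny (\<lambda>i j. psi i j * gb i j * ((q1 i j + q0 i j) / 2) * d i j)
        - K * grid_sum Nx Ny (\<lambda>i j. d i j * Dh dx dy psi ph i j)
        + grid_sum Nx Ny (\<lambda>i j. Bop dx dy psi W i j * d i j)"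
    unfolding grid_sum_mult_left[symmetric] grid_sum_diff[symmetric] grid_sum_add[symmetric]
    by (intro grid_sum_cong) (simp add: algebra_simps)
  also have "grid_sum Nx Ny (\<lambda>i j. d i j * Dh dx dy psi ph i j)
      = - grid_sum Nx Ny (\<lambda>i j. Ax psi i j * Dx dx ph i j * Dx dx d i j + Ay psi i j * Dy dy ph i j * Dy dy d i j)"
    by (rule grid_sum_mult_Dh) fact
  also have "grid_sum Nx Ny (\<lambda>i j. Bop dx dy psi W i j * d i j)
      = grid_sum Nx Ny (\<lambda>i j. \<bar>Dx dx psi i j\<bar> * Ax W i j * Ax d i j + \<bar>Dy dy psi i j\<bar> * Ay W i j * Ay d i j)"
    by (rule grid_sum_Bop_mult) fact
  also have "grid_sum Nx Ny (\<lambda>i j. psi i j * gb i j * ((q1 i j + q0 i j) / 2) * d i j)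
      - K * - grid_sum Nx Ny (\<lambda>i j. Ax psi i j * Dx dx ph i j * Dx dx d i j + Ay psi i j * Dy dy ph i j * Dy dy d i j)
      + grid_sum Nx Ny (\<lambda>i j. \<bar>Dx dx psi i j\<bar> * Ax W i j * Ax d i j + \<bar>Dy dy psi i j\<bar> * Ay W i j * Ay d i j)
      = grid_sum Nx Ny (\<lambda>i j. (energy_density dx dy psi K \<alpha> h1 h2 \<phi>1 q1 i j
                                  - energy_density dx dy psi K \<alpha> h1 h2 \<phi>0 q0 i j) / dt
            + (1 / \<Gamma>) * (\<bar>Dx dx psi i j\<bar> * (Ax d i j)^2 + \<bar>Dy dy psi i j\<bar> * (Ay d i j)^2))"
    unfolding minus_mult_minus mult_minus_right diff_minus_eq_add
      grid_sum_mult_left[symmetric] grid_sum_add[symmetric]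
    unfolding ph_def W_def d_def
    by (intro grid_sum_cong energy_density_diff[symmetric]) (use assms(2) eq3 in auto)
  also have "\<dots> = (grid_sum Nx Ny (energy_density dx dy psi K \<alpha> h1 h2 \<phi>1 q1)
          - grid_sum Nx Ny (energy_density dx dy psi K \<alpha> h1 h2 \<phi>0 q0)) / dt
         + (1 / \<Gamma>) * grid_sum Nx Ny (\<lambda>i j. \<bar>Dx dx psi i j\<bar> * (Ax d i j)^2 + \<bar>Dy dy psi i j\<bar> * (Ay d i j)^2)"
    by (simp add: grid_sum_add grid_sum_diff grid_sum_divide grid_sum_mult_left)
  finally show ?thesis .
qed

definition bulk_dissipation :: "nat \<Rightarrow> nat \<Rightarrow> real \<Rightarrow> real \<Rightarrow> grid \<Rightarrow> grid \<Rightarrow> real" where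
  "bulk_dissipation Nx Ny dx dy M w =
     (\<Sum>i\<in>{0..int Nx}. \<Sum>j\<in>{1..int Ny}. Ax M i j * (Dx dx w i j)^2)
     + (\<Sum>i\<in>{1..int Nx}. \<Sum>j\<in>{0..int Ny}. Ay M i j * (Dy dy w i j)^2)"

definition boundary_dissipation :: "nat \<Rightarrow> nat \<Rightarrow> real \<Rightarrow> real \<Rightarrow> grid \<Rightarrow> real \<Rightarrow> grid \<Rightarrow> real" where
  "boundary_dissipation Nx Ny dx dy psi \<Gamma> v =
     (\<Sum>i\<in>{1..int Nx}. \<Sum>j\<in>{1..int Ny}. (1/2) * (1 / \<Gamma>) *
        ( \<bar>Dx dx psi (i-1) j\<bar> * (Ax v (i-1) j)^2 + \<bar>Dx dx psi i j\<bar> * (Ax v i j)^2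
        + \<bar>Dy dy psi i (j-1)\<bar> * (Ay v i (j-1))^2 + \<bar>Dy dy psi i j\<bar> * (Ay v i j)^2))"

lemma bulk_dissipation_eq_grid_sum:
  assumes "neumann Nx Ny w"
  shows "bulk_dissipation Nx Ny dx dy M w
       = grid_sum Nx Ny (\<lambda>i j. Ax M i j * (Dx dx w i j)^2 + Ay M i j * (Dy dy w i j)^2)"
proof -
  have "{0..int N} = insert 0 {1..int N}" for N
    by auto
  then show ?thesis
    using neumann_D_boundary_eq_0[OF assms]
    by (simp add: bulk_dissipation_def grid_sum_def sum.distrib)
qed

lemma boundary_dissipation_eq_grid_sum:
  assumes "neumann Nx Ny psi"
  shows "boundary_dissipation Nx Ny dx dy psi \<Gamma> v
       = (1 / \<Gamma>) * grid_sum Nx Ny (\<lambda>i j. \<bar>Dx dx psi i j\<bar> * (Ax v i j)^2 + \<bar>Dy dy psi i j\<bar> * (Ay v i j)^2)"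
proof -
  have "grid_sum Nx Ny (\<lambda>i j. (1/2) * (\<bar>Dx dx psi (i-1) j\<bar> * (Ax v (i-1) j)^2 + \<bar>Dx dx psi i j\<bar> * (Ax v i j)^2
        + \<bar>Dy dy psi i (j-1)\<bar> * (Ay v i (j-1))^2 + \<bar>Dy dy psi i j\<bar> * (Ay v i j)^2))
      = grid_sum Nx Ny (\<lambda>i j. \<bar>Dx dx psi i j\<bar> * (Ax v i j)^2 + \<bar>Dy dy psi i j\<bar> * (Ay v i j)^2)"
    using neumann_D_boundary_eq_0[OF assms] by (intro grid_sum_face_mean) simp_all
  moreover have "boundary_dissipation Nx Ny dx dy psi \<Gamma> v
      = (1 / \<Gamma>) * grid_sum Nx Ny (\<lambda>i j. (1/2) * (\<bar>Dx dx psi (i-1) j\<bar> * (Ax v (i-1) j)^2 + \<bar>Dx dx psi i j\<bar> * (Ax v i j)^2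
        + \<bar>Dy dy psi i (j-1)\<bar> * (Ay v i (j-1))^2 + \<bar>Dy dy psi i j\<bar> * (Ay v i j)^2))"
    unfolding boundary_dissipation_def grid_sum_mult_left[symmetric] grid_sum_def by (simp add: sum_divide_distrib mult_ac)
  ultimately show ?thesis
    by simp
qed

lemma bulk_dissipation_nonneg:
  assumes "neumann Nx Ny w" and "\<forall>i\<in>{1..int Nx}. \<forall>j\<in>{1..int Ny}. 0 \<le> M i j"
  shows "0 \<le> bulk_dissipation Nx Ny dx dy M w"
  unfolding bulk_dissipation_eq_grid_sum[OF assms(1)] grid_sum_def
proof (intro sum_nonneg add_nonneg_nonneg)
  fix i j
  assume ij: "i \<in> {1..int Nx}" "j \<in> {1..int Ny}"
  have "Dx dx w i j = 0 \<or> 0 \<le> Ax M i j"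
    using neumann_D_boundary_eq_0(2)[OF assms(1)] assms(2) ij by (cases "i = int Nx") (auto simp: Ax_def)
  then show "0 \<le> Ax M i j * (Dx dx w i j)^2"
    by auto
  have "Dy dy w i j = 0 \<or> 0 \<le> Ay M i j"
    using neumann_D_boundary_eq_0(4)[OF assms(1)] assms(2) ij by (cases "j = int Ny") (auto simp: Ay_def)
  then show "0 \<le> Ay M i j * (Dy dy w i j)^2"
    by auto
qed

lemma boundary_dissipation_nonneg:
  assumes "\<Gamma> > 0"
  shows "0 \<le> boundary_dissipation Nx Ny dx dy psi \<Gamma> v"
  unfolding boundary_dissipation_def using assms by (intro sum_nonneg) simp

lemma energy_law_step:
  assumes "dt \<noteq> 0" and "neumann Nx Ny psi" and "neumann Nx Ny \<phi>0" and "neumann Nx Ny \<phi>1"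
    and "neumann Nx Ny (\<lambda>k l. chi k l * \<mu> k l)"
    and "\<forall>i\<in>{1..int Nx}. \<forall>j\<in>{1..int Ny}. (\<phi>1 i j - \<phi>0 i j) / dt
           = chi i j * Dh dx dy M (\<lambda>k l. chi k l * \<mu> k l) i j - chi i j * Bop dx dy psi h3 i j"
    and "\<forall>i\<in>{1..int Nx}. \<forall>j\<in>{1..int Ny}.
       \<mu> i j = psi i j * gb i j * ((q1 i j + q0 i j) / 2)
         - K * Dh dx dy psi (\<lambda>k l. (\<phi>1 k l + \<phi>0 k l) / 2) i j
         + Bop dx dy psi (\<lambda>k l. \<alpha> * ((\<phi>1 k l + \<phi>0 k l) / 2 - h1 k l) - h2 k l
                                 + (1 / \<Gamma>) * ((\<phi>1 k l - \<phi>0 k l) / dt)) i j"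
    and "\<forall>i\<in>{1..int Nx}. \<forall>j\<in>{1..int Ny}. q1 i j - q0 i j = gb i j * (\<phi>1 i j - \<phi>0 i j)"
  shows "(energy Nx Ny dx dy psi K \<alpha> h1 h2 \<phi>1 q1 - energy Nx Ny dx dy psi K \<alpha> h1 h2 \<phi>0 q0) / dt
       = - dx * dy * bulk_dissipation Nx Ny dx dy M (\<lambda>k l. chi k l * \<mu> k l)
         - dx * dy * boundary_dissipation Nx Ny dx dy psi \<Gamma> (\<lambda>k l. (\<phi>1 k l - \<phi>0 k l) / dt)
         - dx * dy * (\<Sum>i\<in>{1..int Nx}. \<Sum>j\<in>{1..int Ny}. \<mu> i j * chi i j * Bop dx dy psi h3 i j)"
proof -
  have "(grid_sum Nx Ny (energy_density dx dy psi K \<alpha> h1 h2 \<phi>1 q1)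
          - grid_sum Nx Ny (energy_density dx dy psi K \<alpha> h1 h2 \<phi>0 q0)) / dt
        + boundary_dissipation Nx Ny dx dy psi \<Gamma> (\<lambda>k l. (\<phi>1 k l - \<phi>0 k l) / dt)
      = - bulk_dissipation Nx Ny dx dy M (\<lambda>k l. chi k l * \<mu> k l)
        - grid_sum Nx Ny (\<lambda>i j. \<mu> i j * chi i j * Bop dx dy psi h3 i j)"
    using potential_rate_sum_eq_energy_rate[OF assms(1-4,7,8)]
      potential_rate_sum_eq_mobility_dissipation[OF assms(5,6)]
    by (simp add: bulk_dissipation_eq_grid_sum[OF assms(5)] boundary_dissipation_eq_grid_sum[OF assms(2)])
  then have energy_rate: "(grid_sum Nx Ny (energy_density dx dy psi K \<alpha> h1 h2 \<phi>1 q1)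
          - grid_sum Nx Ny (energy_density dx dy psi K \<alpha> h1 h2 \<phi>0 q0)) / dt
      = - bulk_dissipation Nx Ny dx dy M (\<lambda>k l. chi k l * \<mu> k l)
        - boundary_dissipation Nx Ny dx dy psi \<Gamma> (\<lambda>k l. (\<phi>1 k l - \<phi>0 k l) / dt)
        - grid_sum Nx Ny (\<lambda>i j. \<mu> i j * chi i j * Bop dx dy psi h3 i j)"
    by linarith
  have "(energy Nx Ny dx dy psi K \<alpha> h1 h2 \<phi>1 q1 - energy Nx Ny dx dy psi K \<alpha> h1 h2 \<phi>0 q0) / dt
      = dx * dy * ((grid_sum Nx Ny (energy_density dx dy psi K \<alpha> h1 h2 \<phi>1 q1)
          - grid_sum Nx Ny (energy_density dx dy psi K \<alpha> h1 h2 \<phi>0 q0)) / dt)"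
    by (simp add: energy_eq_grid_sum_energy_density[OF assms(2)] right_diff_distrib)
  also note energy_rate
  finally show ?thesis
    by (simp add: grid_sum_def algebra_simps)
qed

lemma Bop_eq_0_if_interior_eq_0:
  assumes "neumann Nx Ny psi" and "\<forall>i\<in>{1..int Nx}. \<forall>j\<in>{1..int Ny}. w i j = 0"
    and "i \<in> {1..int Nx}" and "j \<in> {1..int Ny}"
  shows "Bop dx dy psi w i j = 0"
proof -
  note boundary = neumann_D_boundary_eq_0[OF assms(1)]
  have "Dx dx psi (i - 1) j = 0 \<or> Ax w (i - 1) j = 0"
    using boundary(1) assms(2-4) by (cases "i = 1") (auto simp: Ax_def)
  moreover have "Dx dx psi i j = 0 \<or> Ax w i j = 0"
    using boundary(2) assms(2-4) by (cases "i = int Nx") (auto simp: Ax_def)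
  moreover have "Dy dy psi i (j - 1) = 0 \<or> Ay w i (j - 1) = 0"
    using boundary(3) assms(2-4) by (cases "j = 1") (auto simp: Ay_def)
  moreover have "Dy dy psi i j = 0 \<or> Ay w i j = 0"
    using boundary(4) assms(2-4) by (cases "j = int Ny") (auto simp: Ay_def)
  ultimately show ?thesis
    unfolding Bop_def by auto
qed

theorem theorem2:
  fixes Lx Ly :: real and Nx Ny :: nat
    and psi :: grid and K \<alpha> \<Gamma> dt A :: real
    and Mb :: "nat \<Rightarrow> grid" and h1 h2 h3 :: grid
    and f f' :: "real \<Rightarrow> real"
    and \<phi> q \<mu> :: "nat \<Rightarrow> grid"
    and dx dy :: real and chi :: grid and g :: "real \<Rightarrow> real"
    and gbar :: "nat \<Rightarrow> grid"
  defines "dx \<equiv> Lx / real Nx" and "dy \<equiv> Ly / real Ny"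
    and "chi \<equiv> (\<lambda>i j. 1 / psi i j)"
    and "g \<equiv> gfun f f' A"
    and "gbar \<equiv> (\<lambda>n i j. if n = 0 then g (\<phi> 0 i j)
                         else g ((3/2) * \<phi> n i j - (1/2) * \<phi> (n - 1) i j))"
  assumes "Lx > 0" and "Ly > 0" and "Nx \<ge> 1" and "Ny \<ge> 1"
    and psi_pos: "\<forall>i\<in>{1..int Nx}. \<forall>j\<in>{1..int Ny}. psi i j > 0"
    and "K > 0" and "\<alpha> \<ge> 0" and "\<Gamma> > 0" and "dt > 0"
    and M_pos: "\<forall>n. \<forall>i\<in>{1..int Nx}. \<forall>j\<in>{1..int Ny}. Mb n i j > 0"
    and f_deriv: "\<forall>x. (f has_real_derivative f' x) (at x)"
    and f_pos: "\<forall>x. 2 * f x + 2 * A > 0"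
    and bc_psi: "neumann Nx Ny psi"
    and bc_phi: "\<forall>n. neumann Nx Ny (\<phi> n)"
    and bc_mu: "\<forall>n. neumann Nx Ny (\<mu> n)"
    and eq1: "\<forall>n. \<forall>i\<in>{1..int Nx}. \<forall>j\<in>{1..int Ny}.
       (\<phi> (Suc n) i j - \<phi> n i j) / dt
         = chi i j * Dh dx dy (\<lambda>k l. psi k l * Mb n k l) (\<lambda>k l. chi k l * \<mu> n k l) i j
           - chi i j * Bop dx dy psi h3 i j"
    and eq2: "\<forall>n. \<forall>i\<in>{1..int Nx}. \<forall>j\<in>{1..int Ny}.
       \<mu> n i j = psi i j * gbar n i j * ((q (Suc n) i j + q n i j) / 2)
         - K * Dh dx dy psi (\<lambda>k l. (\<phi> (Suc n) k l + \<phi> n k l) / 2) i j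
         + Bop dx dy psi (\<lambda>k l. \<alpha> * ((\<phi> (Suc n) k l + \<phi> n k l) / 2 - h1 k l) - h2 k l
                                 + (1 / \<Gamma>) * ((\<phi> (Suc n) k l - \<phi> n k l) / dt)) i j"
    and eq3: "\<forall>n. \<forall>i\<in>{1..int Nx}. \<forall>j\<in>{1..int Ny}.
       q (Suc n) i j - q n i j = gbar n i j * (\<phi> (Suc n) i j - \<phi> n i j)"
  shows "\<forall>n.
     (energy Nx Ny dx dy psi K \<alpha> h1 h2 (\<phi> (Suc n)) (q (Suc n))
        - energy Nx Ny dx dy psi K \<alpha> h1 h2 (\<phi> n) (q n)) / dt
     = - dx * dy *
         ((\<Sum>i\<in>{0..int Nx}. \<Sum>j\<in>{1..int Ny}.
             Ax (\<lambda>k l. psi k l * Mb n k l) i j * (Dx dx (\<lambda>k l. chi k l * \<mu> n k l) i j)^2)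
        + (\<Sum>i\<in>{1..int Nx}. \<Sum>j\<in>{0..int Ny}.
             Ay (\<lambda>k l. psi k l * Mb n k l) i j * (Dy dy (\<lambda>k l. chi k l * \<mu> n k l) i j)^2))
       - dx * dy * (\<Sum>i\<in>{1..int Nx}. \<Sum>j\<in>{1..int Ny}.
            (1/2) * (1 / \<Gamma>) *
             ( \<bar>Dx dx psi (i-1) j\<bar> * (Ax (\<lambda>k l. (\<phi> (Suc n) k l - \<phi> n k l) / dt) (i-1) j)^2
             + \<bar>Dx dx psi i j\<bar> * (Ax (\<lambda>k l. (\<phi> (Suc n) k l - \<phi> n k l) / dt) i j)^2
             + \<bar>Dy dy psi i (j-1)\<bar> * (Ay (\<lambda>k l. (\<phi> (Suc n) k l - \<phi> n k l) / dt) i (j-1))^2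
             + \<bar>Dy dy psi i j\<bar> * (Ay (\<lambda>k l. (\<phi> (Suc n) k l - \<phi> n k l) / dt) i j)^2))
       - dx * dy * (\<Sum>i\<in>{1..int Nx}. \<Sum>j\<in>{1..int Ny}.
            \<mu> n i j * chi i j * Bop dx dy psi h3 i j)
     \<and> ((\<forall>i\<in>{1..int Nx}. \<forall>j\<in>{1..int Ny}. h3 i j = 0) \<longrightarrow>
          energy Nx Ny dx dy psi K \<alpha> h1 h2 (\<phi> (Suc n)) (q (Suc n))
            \<le> energy Nx Ny dx dy psi K \<alpha> h1 h2 (\<phi> n) (q n))"
proof -
  let ?E = "\<lambda>n. energy Nx Ny dx dy psi K \<alpha> h1 h2 (\<phi> n) (q n)"
  let ?bulk = "\<lambda>n. bulk_dissipation Nx Ny dx dy (\<lambda>k l. psi k l * Mb n k l) (\<lambda>k l. chi k l * \<mu> n k l)"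
  let ?bdry = "\<lambda>n. boundary_dissipation Nx Ny dx dy psi \<Gamma> (\<lambda>k l. (\<phi> (Suc n) k l - \<phi> n k l) / dt)"
  let ?src = "\<lambda>n. \<Sum>i\<in>{1..int Nx}. \<Sum>j\<in>{1..int Ny}. \<mu> n i j * chi i j * Bop dx dy psi h3 i j"
  have flux_bc: "neumann Nx Ny (\<lambda>k l. chi k l * \<mu> n k l)" for n
    unfolding chi_def using bc_psi bc_mu[rule_format, of n] by (rule neumann_combine)
  have law: "(?E (Suc n) - ?E n) / dt = - dx * dy * ?bulk n - dx * dy * ?bdry n - dx * dy * ?src n" for n
    using \<open>dt > 0\<close> bc_psi bc_phi flux_bc spec[OF eq1, of n] spec[OF eq2, of n] spec[OF eq3, of n]
    by (intro energy_law_step) auto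
  have "0 \<le> dx * dy"
    unfolding dx_def dy_def using \<open>Lx > 0\<close> \<open>Ly > 0\<close> by simp
  moreover have "\<forall>i\<in>{1..int Nx}. \<forall>j\<in>{1..int Ny}. 0 \<le> psi i j * Mb n i j" for n
    using psi_pos M_pos by (simp add: less_imp_le)
  ultimately have dissipation: "0 \<le> dx * dy * ?bulk n" "0 \<le> dx * dy * ?bdry n" for n
    using flux_bc \<open>\<Gamma> > 0\<close> by (simp_all add: bulk_dissipation_nonneg boundary_dissipation_nonneg)
  have "?E (Suc n) \<le> ?E n" if "\<forall>i\<in>{1..int Nx}. \<forall>j\<in>{1..int Ny}. h3 i j = 0" for n
  proof -
    have "?src n = 0"
      using Bop_eq_0_if_interior_eq_0[OF bc_psi that] by simp
    then have "(?E (Suc n) - ?E n) / dt \<le> 0"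
      using law[of n] dissipation[of n] by simp
    then show ?thesis
      using \<open>dt > 0\<close> by (simp add: divide_le_0_iff)
  qed
  with law show ?thesis
    unfolding bulk_dissipation_def boundary_dissipation_def by blast
qed

end
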